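(* (i) Let $d\ge 2$ and let $\rho_{AB}$ be any state on $\mathbb{C}^d\otimes\mathbb{C}^2$ (Alice holds the qudit, Bob the qubit). Let $\rho_A=\operatorname{Tr}_B[\rho_{AB}]$, $\mu_1\in[0,\tfrac{1}{\sqrt3}]$, and $\tau^1_{AB}=\mu_1\rho_{AB}+(1-\mu_1)\rho_A\otimes\tfrac{\mathbb{I}_2}{2}$. If $\tau^1_{AB}$ is entangled, then $\rho_{AB}$ is EPR steerable from Bob to Alice. (ii) Let $d\ge 2$ and let $\rho_{AB}$ be any state on $\mathbb{C}^2\otimes\mathbb{C}^d$ (Alice holds the qubit, Bob the qudit). Let $\rho_B=\operatorname{Tr}_A[\rho_{AB}]$, $\mu_2\in[0,\tfrac{1}{\sqrt3}]$, and $\tau^2_{AB}=\mu_2\rho_{AB}+(1-\mu_2)\tfrac{\mathbb{I}_2}{2}\otimes\rho_B$. If $\tau^2_{AB}$ is entangled, then $\rho_{AB}$ is EPR steerable from Alice to Bob.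
   Context: $\mathbb{I}_2$ is the $2\times2$ identity. Measurements are arbitrary POVMs $A=\{M^A_a\}$ on Alice's system and $B=\{M^B_b\}$ on Bob's system, with $P(a,b|A,B,\rho_{AB})=\operatorname{Tr}[(M^A_a\otimes M^B_b)\rho_{AB}]$. $\rho_{AB}$ is NOT EPR steerable from Bob to Alice iff there exist a distribution $P(\lambda)$, quantum states $\rho^A_\lambda$ on Alice's system and arbitrary distributions $P(b|B,\lambda)$ with $P(a,b|A,B,\rho_{AB})=\sum_\lambda P(\lambda)\operatorname{Tr}[\rho^A_\lambda M^A_a]P(b|B,\lambda)$ for all $A,B,a,b$; otherwise it is steerable from Bob to Alice. $\rho_{AB}$ is NOT EPR steerable from Alice to Bob iff there exist $P(\lambda)$, arbitrary distributions $P(a|A,\lambda)$ and quantum states $\rho^B_\lambda$ on Bob's system with $P(a,b|A,B,\rho_{AB})=\sum_\lambda P(\lambda)P(a|A,\lambda)\operatorname{Tr}[\rho^B_\lambda M^B_b]$ for all $A,B,a,b$; otherwise it is steerable from Alice to Bob. A bipartite state is separable if it is a convex combination of product states $\rho^A_\lambda\otimes\rho^B_\lambda$, and entangled otherwise. *)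

theory Defs
  imports "HOL-Analysis.Analysis" "HOL-Probability.Probability_Mass_Function"
begin

text \<open>Operators on a finite-dimensional Hilbert space with orthonormal basis indexed by
  the finite type 'n are complex 'n x 'n matrices. The qubit space is indexed by type 2,
  the qudit space by a finite type 'd with CARD('d) = d. The composite space of Alice ('a)
  and Bob ('b) is indexed by 'a \<times> 'b.\<close>

type_synonym 'n cmat = "complex ^ 'n ^ 'n"

definition mtrace :: "'n::finite cmat \<Rightarrow> complex" where
  "mtrace M = (\<Sum>i\<in>UNIV. M $ i $ i)"

definition psd :: "'n::finite cmat \<Rightarrow> bool" where
  "psd M \<longleftrightarrow> (\<forall>v :: complex ^ 'n.
     let q = (\<Sum>i\<in>UNIV. \<Sum>j\<in>UNIV. cnj (v $ i) * M $ i $ j * v $ j)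
     in Im q = 0 \<and> Re q \<ge> 0)"

definition qstate :: "'n::finite cmat \<Rightarrow> bool" where
  "qstate \<rho> \<longleftrightarrow> psd \<rho> \<and> mtrace \<rho> = 1"

text \<open>A POVM with finitely many outcomes 0..<n: effects M 0, ..., M (n-1).\<close>
type_synonym 'n povm = "nat \<times> (nat \<Rightarrow> 'n cmat)"

definition is_povm :: "'n::finite povm \<Rightarrow> bool" where
  "is_povm A \<longleftrightarrow> (\<forall>a < fst A. psd (snd A a)) \<and> (\<Sum>a<fst A. snd A a) = mat 1"

definition kron :: "'a::finite cmat \<Rightarrow> 'b::finite cmat \<Rightarrow> ('a \<times> 'b) cmat" where
  "kron X Y = (\<chi> ij kl. X $ fst ij $ fst kl * Y $ snd ij $ snd kl)"

definition ptrace_B :: "('a::finite \<times> 'b::finite) cmat \<Rightarrow> 'a cmat" where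
  "ptrace_B \<rho> = (\<chi> i k. \<Sum>j\<in>UNIV. \<rho> $ (i, j) $ (k, j))"

definition ptrace_A :: "('a::finite \<times> 'b::finite) cmat \<Rightarrow> 'b cmat" where
  "ptrace_A \<rho> = (\<chi> j l. \<Sum>i\<in>UNIV. \<rho> $ (i, j) $ (i, l))"

definition joint_prob ::
  "('a::finite \<times> 'b::finite) cmat \<Rightarrow> 'a povm \<Rightarrow> 'b povm \<Rightarrow> nat \<Rightarrow> nat \<Rightarrow> complex" where
  "joint_prob \<rho> A B a b = mtrace (kron (snd A a) (snd B b) ** \<rho>)"

definition separable :: "('a::finite \<times> 'b::finite) cmat \<Rightarrow> bool" where
  "separable \<rho> \<longleftrightarrow> (\<exists>(n::nat) (p::nat \<Rightarrow> real) \<sigma>A \<sigma>B.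
      (\<forall>i<n. p i \<ge> 0 \<and> qstate (\<sigma>A i) \<and> qstate (\<sigma>B i)) \<and> (\<Sum>i<n. p i) = 1 \<and>
      \<rho> = (\<Sum>i<n. p i *\<^sub>R kron (\<sigma>A i) (\<sigma>B i)))"

definition entangled :: "('a::finite \<times> 'b::finite) cmat \<Rightarrow> bool" where
  "entangled \<rho> \<longleftrightarrow> \<not> separable \<rho>"

definition response :: "('n::finite povm \<Rightarrow> 'l \<Rightarrow> nat \<Rightarrow> real) \<Rightarrow> bool" where
  "response r \<longleftrightarrow> (\<forall>X l. is_povm X \<longrightarrow>
      (\<forall>x < fst X. r X l x \<ge> 0) \<and> (\<Sum>x<fst X. r X l x) = 1)"

text \<open>Not steerable from Bob to Alice: a local hidden state model for Alice
  (hidden variable of type 'l, discrete distribution P(\<lambda>) given as a pmf).\<close>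
definition unsteerable_B_to_A ::
  "'l itself \<Rightarrow> ('a::finite \<times> 'b::finite) cmat \<Rightarrow> bool" where
  "unsteerable_B_to_A _ \<rho> \<longleftrightarrow> (\<exists>(P :: 'l pmf) (\<sigma> :: 'l \<Rightarrow> 'a cmat) (r :: 'b povm \<Rightarrow> 'l \<Rightarrow> nat \<Rightarrow> real).
      (\<forall>l. qstate (\<sigma> l)) \<and> response r \<and>
      (\<forall>A B a b. is_povm A \<longrightarrow> is_povm B \<longrightarrow> a < fst A \<longrightarrow> b < fst B \<longrightarrow>
         joint_prob \<rho> A B a b =
           complex_of_real (measure_pmf.expectation P
             (\<lambda>l. Re (mtrace (\<sigma> l ** snd A a)) * r B l b))))"

definition unsteerable_A_to_B ::
  "'l itself \<Rightarrow> ('a::finite \<times> 'b::finite) cmat \<Rightarrow> bool" where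
  "unsteerable_A_to_B _ \<rho> \<longleftrightarrow> (\<exists>(P :: 'l pmf) (r :: 'a povm \<Rightarrow> 'l \<Rightarrow> nat \<Rightarrow> real) (\<sigma> :: 'l \<Rightarrow> 'b cmat).
      (\<forall>l. qstate (\<sigma> l)) \<and> response r \<and>
      (\<forall>A B a b. is_povm A \<longrightarrow> is_povm B \<longrightarrow> a < fst A \<longrightarrow> b < fst B \<longrightarrow>
         joint_prob \<rho> A B a b =
           complex_of_real (measure_pmf.expectation P
             (\<lambda>l. r A l a * Re (mtrace (\<sigma> l ** snd B b))))))"

abbreviation steerable_B_to_A where
  "steerable_B_to_A L \<rho> \<equiv> \<not> unsteerable_B_to_A L \<rho>"
abbreviation steerable_A_to_B where
  "steerable_A_to_B L \<rho> \<equiv> \<not> unsteerable_A_to_B L \<rho>"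

end

theory Submission
  imports Defs
begin

(* If Bob cannot steer Alice, a local hidden state model writes Alice's conditional operator
   Tr_B[rho (I x Y)] for each effect Y of Bob as the average of P(Y|l) sigma_l; this is read off
   from quadratic forms, using Alice's two-outcome measurements {|v><v|, I - |v><v|}.
   A qubit on Bob's side is reconstructed from the conditional operators of the Pauli
   projectors, and substituting the model shows that tau = mu rho + (1 - mu) rho_A x I/2 is the
   average of sigma_l x beta_l, where beta_l is the qubit state with Bloch vector
   mu (2 P(+|sigma_k, l) - 1)_k.  That vector has length at most sqrt 3 mu <= 1, so beta_l is a
   state; and an average of product states lies in the compact convex hull of the product
   states, hence tau is separable.  Part (ii) follows by exchanging the parties. *)

section \<open>Quadratic forms and polarisation\<close>

definition qform :: "'n::finite cmat \<Rightarrow> complex ^ 'n \<Rightarrow> complex" where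
  "qform M v = (\<Sum>i\<in>UNIV. \<Sum>j\<in>UNIV. cnj (v $ i) * M $ i $ j * v $ j)"

lemma psd_iff_qform: "psd M \<longleftrightarrow> (\<forall>v. Im (qform M v) = 0 \<and> 0 \<le> Re (qform M v))"
  unfolding psd_def qform_def Let_def by simp

lemma qform_diff: "qform (M - N) v = qform M v - qform N v"
  unfolding qform_def by (simp add: algebra_simps sum_subtractf)

lemma qform_scaleR: "qform (c *\<^sub>R M) v = of_real c * qform M v"
  by (simp add: qform_def sum_distrib_left scaleR_conv_of_real[where 'a = complex] algebra_simps)

lemma bounded_linear_qform: "bounded_linear (\<lambda>M. qform M v)"
  unfolding linear_conv_bounded_linear[symmetric]
  by (rule linearI)
    (simp_all add: qform_scaleR scaleR_conv_of_real[where 'a = complex], simp add: qform_def algebra_simps sum.distrib)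

definition vec2 :: "'n::finite \<Rightarrow> 'n \<Rightarrow> complex \<Rightarrow> complex \<Rightarrow> complex ^ 'n" where
  "vec2 i j a b = (\<chi> k. (if k = i then a else 0) + (if k = j then b else 0))"

lemma qform_vec2:
  "qform M (vec2 i j a b) =
     cnj a * a * M$i$i + cnj a * b * M$i$j + cnj b * a * M$j$i + cnj b * b * M$j$j"
proof -
  have [simp]: "x * (if P then y else 0) = (if P then x * y else 0)"
    "(if P then y else 0) * x = (if P then y * x else 0)"
    "cnj (if P then y else 0) = (if P then cnj y else 0)" for x y :: complex and P
    by simp_all
  have row: "(\<Sum>l\<in>UNIV. c l * vec2 i j a b $ l) = c i * a + c j * b" for c :: "'a \<Rightarrow> complex"
    unfolding vec2_def by (simp add: distrib_left sum.distrib)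
  have col: "(\<Sum>k\<in>UNIV. cnj (vec2 i j a b $ k) * c k) = cnj a * c i + cnj b * c j"
    for c :: "'a \<Rightarrow> complex"
    unfolding vec2_def by (simp add: distrib_right sum.distrib)
  have "qform M (vec2 i j a b) =
      (\<Sum>k\<in>UNIV. cnj (vec2 i j a b $ k) * (\<Sum>l\<in>UNIV. M$k$l * vec2 i j a b $ l))"
    unfolding qform_def by (simp add: sum_distrib_left mult.assoc)
  also have "\<dots> = cnj a * (M$i$i * a + M$i$j * b) + cnj b * (M$j$i * a + M$j$j * b)"
    by (simp add: row col)
  finally show ?thesis by (simp add: algebra_simps)
qed

lemma qform_vec2_basis: "qform M (vec2 i j 1 0) = M$i$i"
  by (simp add: qform_vec2)

lemma qstate_diagonal:
  assumes "qstate M"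
  shows "Im (M$i$i) = 0 \<and> 0 \<le> Re (M$i$i) \<and> Re (M$i$i) \<le> 1"
proof -
  have diag: "Im (M$k$k) = 0 \<and> 0 \<le> Re (M$k$k)" for k
    using assms qform_vec2_basis[of M k] unfolding qstate_def psd_iff_qform by metis
  have "(\<Sum>k\<in>UNIV. Re (M$k$k)) = 1"
    using assms by (simp add: qstate_def mtrace_def flip: Re_sum)
  moreover have "Re (M$i$i) \<le> (\<Sum>k\<in>UNIV. Re (M$k$k))"
    by (rule member_le_sum) (auto simp: diag)
  ultimately show ?thesis using diag by simp
qed

lemma qstate_entry_norm_le:
  assumes "qstate M"
  shows "cmod (M$i$j) \<le> 2"
proof (cases "i = j")
  case True
  then show ?thesis using qstate_diagonal[OF assms, of i] cmod_le[of "M$i$i"] by simp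
next
  case False
  have "Im (qform M (vec2 i j 1 b)) = 0 \<and> 0 \<le> Re (qform M (vec2 i j 1 b))" for b
    using assms unfolding qstate_def psd_iff_qform by blast
  note test = this[unfolded qform_vec2, of 1] this[unfolded qform_vec2, of "-1"]
    this[unfolded qform_vec2, of \<i>] this[unfolded qform_vec2, of "-\<i>"]
  have "\<bar>Re (M$i$j)\<bar> \<le> 1" "\<bar>Im (M$i$j)\<bar> \<le> 1"
    using test qstate_diagonal[OF assms, of i] qstate_diagonal[OF assms, of j]
    by (auto simp: abs_le_iff)
  then show ?thesis using cmod_le[of "M$i$j"] by simp
qed

lemma bounded_qstates: "bounded {M :: 'n::finite cmat. qstate M}"
proof -
  have "norm M \<le> (\<Sum>i\<in>UNIV. \<Sum>j\<in>UNIV. cmod (M$i$j))" for M :: "'n cmat"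
    unfolding norm_vec_def
    by (rule order_trans[OF L2_set_le_sum], simp, rule sum_mono, simp add: L2_set_le_sum)
  moreover have "(\<Sum>i\<in>UNIV. \<Sum>j\<in>UNIV. cmod (M$i$j)) \<le> (\<Sum>i\<in>(UNIV :: 'n set). \<Sum>j\<in>(UNIV :: 'n set). 2)"
    if "qstate M" for M :: "'n cmat"
    using that by (intro sum_mono qstate_entry_norm_le)
  ultimately have "qstate M \<Longrightarrow> norm M \<le> (\<Sum>i\<in>(UNIV :: 'n set). \<Sum>j\<in>(UNIV :: 'n set). 2)"
    for M :: "'n cmat"
    by (meson order_trans)
  then show ?thesis unfolding bounded_iff by blast
qed

lemma closed_qstates: "closed {M :: 'n::finite cmat. qstate M}"
proof -
  have cont: "continuous_on UNIV (\<lambda>M :: 'n cmat. qform M v)" "continuous_on UNIV (\<lambda>M :: 'n cmat. mtrace M)" for v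
    unfolding qform_def mtrace_def by (intro continuous_intros continuous_on_component continuous_on_id)+
  have "{M :: 'n cmat. qstate M} =
      (\<Inter>v. {M. Im (qform M v) = 0} \<inter> {M. 0 \<le> Re (qform M v)}) \<inter> {M. mtrace M = 1}"
    by (auto simp: qstate_def psd_iff_qform)
  also have "closed \<dots>"
    by (intro closed_Int closed_INT ballI closed_Collect_eq closed_Collect_le
        continuous_intros cont continuous_on_Re continuous_on_Im)
  finally show ?thesis .
qed

lemma compact_qstates: "compact {M :: 'n::finite cmat. qstate M}"
  using bounded_qstates closed_qstates by (simp add: compact_eq_bounded_closed)

lemma polarization:
  "2 * M$i$j = 4 * qform M (vec2 i j (1/2) (1/2)) - 4 * \<i> * qform M (vec2 i j (1/2) (\<i>/2))
     + (\<i> - 1) * (M$i$i + M$j$j)"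
  unfolding qform_vec2 by (simp add: algebra_simps)

lemma norm2_vec2_le: "(\<Sum>k\<in>UNIV. (cmod (vec2 i j a b $ k))\<^sup>2) \<le> (cmod a + cmod b)\<^sup>2"
proof (cases "i = j")
  case True
  have "(cmod (vec2 i j a b $ k))\<^sup>2 = (if k = j then (cmod (a + b))\<^sup>2 else 0)" for k
    using True by (simp add: vec2_def)
  then have "(\<Sum>k\<in>UNIV. (cmod (vec2 i j a b $ k))\<^sup>2) = (cmod (a + b))\<^sup>2"
    by simp
  also have "\<dots> \<le> (cmod a + cmod b)\<^sup>2" by (simp add: norm_triangle_ineq power_mono)
  finally show ?thesis .
next
  case False
  have "(cmod (vec2 i j a b $ k))\<^sup>2 = (if k = i then (cmod a)\<^sup>2 else 0) + (if k = j then (cmod b)\<^sup>2 else 0)" for k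
    using False by (simp add: vec2_def)
  then have "(\<Sum>k\<in>UNIV. (cmod (vec2 i j a b $ k))\<^sup>2) = (cmod a)\<^sup>2 + (cmod b)\<^sup>2"
    by (simp add: sum.distrib)
  then show ?thesis by (simp add: power2_sum)
qed

(* Vectors of norm at most 1 suffice, and only for those is mat 1 - proj v an effect. *)
lemma eq_if_qform_eq:
  fixes M N :: "'n::finite cmat"
  assumes "\<And>v. (\<Sum>k\<in>UNIV. (cmod (v$k))\<^sup>2) \<le> 1 \<Longrightarrow> qform M v = qform N v"
  shows "M = N"
proof -
  have test: "qform M (vec2 i j a b) = qform N (vec2 i j a b)" if "cmod a + cmod b \<le> 1" for i j a b
  proof (rule assms, rule order_trans[OF norm2_vec2_le])
    show "(cmod a + cmod b)\<^sup>2 \<le> 1" using that by (simp add: power_le_one)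
  qed
  have diag: "M$i$i = N$i$i" for i
    using test[of 1 0 i i] by (simp add: qform_vec2_basis)
  have "2 * M$i$j = 2 * N$i$j" for i j
    using polarization[of M i j] polarization[of N i j] diag[of i] diag[of j]
      test[of "1/2" "1/2" i j] test[of "1/2" "\<i>/2" i j]
    by (simp add: norm_divide)
  then show ?thesis by (simp add: vec_eq_iff)
qed

section \<open>Two-outcome measurements\<close>

lemma cnj_mult_self: "cnj z * z = of_real ((cmod z)\<^sup>2)"
  by (metis complex_norm_square mult.commute)

definition proj :: "complex ^ 'n::finite \<Rightarrow> 'n cmat" where
  "proj v = (\<chi> i j. v$i * cnj (v$j))"

lemma qform_proj: "qform (proj v) w = of_real ((cmod (\<Sum>i\<in>UNIV. cnj (w$i) * v$i))\<^sup>2)"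
proof -
  let ?z = "\<Sum>i\<in>UNIV. cnj (w$i) * v$i"
  have "qform (proj v) w = ?z * (\<Sum>j\<in>UNIV. cnj (v$j) * w$j)"
    unfolding qform_def proj_def by (simp add: sum_product algebra_simps)
  also have "(\<Sum>j\<in>UNIV. cnj (v$j) * w$j) = cnj ?z"
    by (simp add: cnj_sum mult.commute)
  finally show ?thesis by (metis complex_norm_square)
qed

lemma qform_mat_1: "qform (mat 1) w = of_real (\<Sum>i\<in>UNIV. (cmod (w$i))\<^sup>2)"
proof -
  have "qform (mat 1) w = (\<Sum>i\<in>UNIV. cnj (w$i) * w$i)"
    unfolding qform_def mat_def by (simp add: if_distrib if_distribR cong: if_cong)
  then show ?thesis by (simp add: cnj_mult_self)
qed

lemma psd_proj: "psd (proj v)"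
  unfolding psd_iff_qform qform_proj by simp

lemma psd_id_minus_proj:
  assumes "(\<Sum>i\<in>UNIV. (cmod (v$i))\<^sup>2) \<le> 1"
  shows "psd (mat 1 - proj v)"
proof -
  have "(cmod (\<Sum>i\<in>UNIV. cnj (w$i) * v$i))\<^sup>2 \<le> (\<Sum>i\<in>UNIV. (cmod (w$i))\<^sup>2)" for w
  proof -
    have "cmod (\<Sum>i\<in>UNIV. cnj (w$i) * v$i) \<le> (\<Sum>i\<in>UNIV. cmod (w$i) * cmod (v$i))"
      by (rule order_trans[OF norm_sum]) (simp add: norm_mult)
    then have "(cmod (\<Sum>i\<in>UNIV. cnj (w$i) * v$i))\<^sup>2 \<le> (\<Sum>i\<in>UNIV. cmod (w$i) * cmod (v$i))\<^sup>2"
      by (rule power_mono) simp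
    also have "\<dots> \<le> (\<Sum>i\<in>UNIV. (cmod (w$i))\<^sup>2) * (\<Sum>i\<in>UNIV. (cmod (v$i))\<^sup>2)"
      by (rule Cauchy_Schwarz_ineq_sum)
    also have "\<dots> \<le> (\<Sum>i\<in>UNIV. (cmod (w$i))\<^sup>2)"
      using assms by (simp add: mult_left_le sum_nonneg)
    finally show ?thesis .
  qed
  then show ?thesis unfolding psd_iff_qform qform_diff qform_mat_1 qform_proj by simp
qed

lemma mtrace_mult_proj: "mtrace (M ** proj v) = qform M v"
  unfolding mtrace_def matrix_matrix_mult_def proj_def qform_def
  by (simp add: sum_distrib_left sum_distrib_right algebra_simps)

definition two_outcome_povm :: "'n::finite cmat \<Rightarrow> 'n povm" where
  "two_outcome_povm P = (2, \<lambda>a. if a = 0 then P else mat 1 - P)"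

lemma is_povm_two_outcome_povm:
  "psd P \<Longrightarrow> psd (mat 1 - P) \<Longrightarrow> is_povm (two_outcome_povm P)"
  unfolding is_povm_def two_outcome_povm_def
  by (auto simp: numeral_2_eq_2 lessThan_Suc less_Suc_eq)

lemma response_bounds:
  assumes "response r" "is_povm X" "x < fst X"
  shows "0 \<le> r X l x \<and> r X l x \<le> 1"
proof -
  have nonneg: "\<forall>y<fst X. 0 \<le> r X l y" and total: "(\<Sum>y<fst X. r X l y) = 1"
    using assms(1,2) unfolding response_def by blast+
  have "r X l x \<le> (\<Sum>y<fst X. r X l y)"
    by (rule member_le_sum) (use nonneg assms(3) in auto)
  then show ?thesis using nonneg total assms(3) by auto
qed

lemma response_two_outcome_sum:
  assumes "response r" "is_povm (two_outcome_povm P)"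
  shows "r (two_outcome_povm P) l 0 + r (two_outcome_povm P) l 1 = 1"
proof -
  have "(\<Sum>x<fst (two_outcome_povm P). r (two_outcome_povm P) l x) = 1"
    using assms unfolding response_def by blast
  then show ?thesis by (simp add: two_outcome_povm_def numeral_2_eq_2)
qed

section \<open>Qubit states and Pauli measurements\<close>

definition pauli :: "3 \<Rightarrow> complex ^ 2 ^ 2" where
  "pauli k = (\<chi> i j.
     if k = 1 then (if i = j then 0 else 1)
     else if k = 2 then (if i = j then 0 else if i = 1 then - \<i> else \<i>)
     else (if i \<noteq> j then 0 else if i = 1 then 1 else - 1))"

lemma pauli_entries:
  "pauli 1 $ 1 $ 1 = 0" "pauli 1 $ 1 $ 2 = 1" "pauli 1 $ 2 $ 1 = 1" "pauli 1 $ 2 $ 2 = 0"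
  "pauli 2 $ 1 $ 1 = 0" "pauli 2 $ 1 $ 2 = - \<i>" "pauli 2 $ 2 $ 1 = \<i>" "pauli 2 $ 2 $ 2 = 0"
  "pauli 3 $ 1 $ 1 = 1" "pauli 3 $ 1 $ 2 = 0" "pauli 3 $ 2 $ 1 = 0" "pauli 3 $ 2 $ 2 = - 1"
  by (simp_all add: pauli_def)

definition bloch_state :: "real ^ 3 \<Rightarrow> complex ^ 2 ^ 2" where
  "bloch_state s = (1/2) *\<^sub>R (mat 1 + (\<Sum>k\<in>UNIV. s$k *\<^sub>R pauli k))"

lemma bloch_state_entries:
  "bloch_state s $ 1 $ 1 = (1 + s$3) / 2" "bloch_state s $ 2 $ 2 = (1 - s$3) / 2"
  "bloch_state s $ 1 $ 2 = (s$1 - \<i> * s$2) / 2" "bloch_state s $ 2 $ 1 = (s$1 + \<i> * s$2) / 2"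
  by (simp_all add: bloch_state_def pauli_def sum_3 mat_def sum_component
      vector_add_component vector_scaleR_component, simp_all add: scaleR_conv_of_real field_simps)

lemma psd_2x2:
  fixes M :: "complex ^ 2 ^ 2"
  assumes "M$1$1 = of_real p" "M$2$2 = of_real q" "M$2$1 = cnj (M$1$2)"
    and "0 \<le> p" "0 \<le> q" "(cmod (M$1$2))\<^sup>2 \<le> p * q"
  shows "psd M"
  unfolding psd_iff_qform
proof
  fix v :: "complex ^ 2"
  define w where "w = cnj (v$1) * M$1$2 * v$2"
  define A B where "A = cmod (v$1)" and "B = cmod (v$2)"
  have "qform M v = of_real p * (cnj (v$1) * v$1) + of_real q * (cnj (v$2) * v$2) + (w + cnj w)"
    unfolding qform_def w_def using assms(1-3) by (simp add: UNIV_2 algebra_simps)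
  also have "\<dots> = of_real (p * A\<^sup>2 + q * B\<^sup>2 + 2 * Re w)"
    by (simp add: A_def B_def complex_add_cnj cnj_mult_self)
  finally have qv: "qform M v = of_real (p * A\<^sup>2 + q * B\<^sup>2 + 2 * Re w)" .
  have "\<bar>Re w\<bar> \<le> A * cmod (M$1$2) * B"
    using abs_Re_le_cmod[of w] by (simp add: w_def A_def B_def norm_mult)
  also have "\<dots> \<le> A * (sqrt p * sqrt q) * B"
    using assms(6) by (intro mult_right_mono mult_left_mono)
      (auto simp: A_def B_def real_le_rsqrt simp flip: real_sqrt_mult)
  also have "2 * \<dots> \<le> p * A\<^sup>2 + q * B\<^sup>2"
    using assms(4,5) zero_le_power2[of "sqrt p * A - sqrt q * B"]
    by (simp add: power2_eq_square algebra_simps)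
  finally show "Im (qform M v) = 0 \<and> 0 \<le> Re (qform M v)"
    using qv by simp
qed

lemma power2_norm_vec3: "(norm s)\<^sup>2 = (s$1)\<^sup>2 + (s$2)\<^sup>2 + (s$3)\<^sup>2" for s :: "real ^ 3"
proof -
  have "(s$1)\<^sup>2 + (s$2)\<^sup>2 + (s$3)\<^sup>2 = inner s s"
    by (simp add: inner_vec_def sum_3 power2_eq_square)
  then show ?thesis by (simp add: power2_norm_eq_inner)
qed

lemma qstate_bloch_state:
  assumes "norm s \<le> 1"
  shows "qstate (bloch_state s)"
proof -
  have "(s$1)\<^sup>2 + (s$2)\<^sup>2 + (s$3)\<^sup>2 = (norm s)\<^sup>2"
    by (rule power2_norm_vec3[symmetric])
  also have "\<dots> \<le> 1" using assms by (simp add: power_le_one)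
  finally have ball: "(s$1)\<^sup>2 + (s$2)\<^sup>2 + (s$3)\<^sup>2 \<le> 1" .
  then have "(s$3)\<^sup>2 \<le> 1"
    using zero_le_power2[of "s$1"] zero_le_power2[of "s$2"] by linarith
  then have "\<bar>s$3\<bar> \<le> 1"
    by (simp add: abs_square_le_1)
  moreover have "(cmod (bloch_state s $ 1 $ 2))\<^sup>2 = ((s$1)\<^sup>2 + (s$2)\<^sup>2) / 4"
    by (simp add: bloch_state_entries cmod_power2 power_divide)
  ultimately have "psd (bloch_state s)"
    using ball by (intro psd_2x2[where p = "(1 + s$3) / 2" and q = "(1 - s$3) / 2"])
      (auto simp: bloch_state_entries complex_eq_iff power2_eq_square field_simps)
  moreover have "mtrace (bloch_state s) = 1"
    by (simp add: mtrace_def UNIV_2 bloch_state_entries field_simps)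
  ultimately show ?thesis by (simp add: qstate_def)
qed

lemma norm_le_1_if_abs_components_le:
  fixes s :: "real ^ 3"
  assumes "\<And>k. \<bar>s$k\<bar> \<le> c" "c \<le> 1 / sqrt 3"
  shows "norm s \<le> 1"
proof -
  have "0 \<le> c"
    using assms(1)[of 1] by linarith
  then have "(s$k)\<^sup>2 \<le> c\<^sup>2" for k
    using power_mono[OF assms(1) abs_ge_zero, where n = 2] by simp
  then have "(norm s)\<^sup>2 \<le> c\<^sup>2 + c\<^sup>2 + c\<^sup>2"
    unfolding power2_norm_vec3 by (intro add_mono)
  also have "\<dots> \<le> 1"
    using power_mono[OF assms(2) \<open>0 \<le> c\<close>, of 2] by (simp add: power_divide)
  finally show ?thesis
    by (simp add: abs_square_le_1)
qed

lemma bloch_state_axis: "bloch_state (axis k c) = (1/2) *\<^sub>R (mat 1 + c *\<^sub>R pauli k)"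
  by (simp add: bloch_state_def axis_def if_distrib[of "\<lambda>x. x *\<^sub>R pauli _"] cong: if_cong)

lemma id_minus_bloch_state: "mat 1 - bloch_state s = bloch_state (- s)"
proof -
  have "mat 1 - (1/2) *\<^sub>R (mat 1 + S) = (1/2) *\<^sub>R (mat 1 - S)" for S :: "complex ^ 2 ^ 2"
    by (simp add: vec_eq_iff mat_def, simp add: scaleR_conv_of_real field_simps)
  then show ?thesis by (simp add: bloch_state_def sum_negf)
qed

lemma pauli_eq_bloch_state: "pauli k = 2 *\<^sub>R bloch_state (axis k 1) - mat 1"
  unfolding bloch_state_axis scaleR_scaleR by simp

definition pauli_measurement :: "3 \<Rightarrow> 2 povm" where
  "pauli_measurement k = two_outcome_povm (bloch_state (axis k 1))"

lemma is_povm_pauli_measurement: "is_povm (pauli_measurement k)"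
  unfolding pauli_measurement_def
proof (rule is_povm_two_outcome_povm)
  have "qstate (bloch_state (axis k 1))" "qstate (bloch_state (- axis k 1))"
    by (simp_all add: qstate_bloch_state)
  then show "psd (bloch_state (axis k 1))" "psd (mat 1 - bloch_state (axis k 1))"
    by (simp_all add: id_minus_bloch_state qstate_def)
qed

section \<open>Assemblages and Pauli tomography\<close>

lemma sum_UNIV_prod: "(\<Sum>p\<in>UNIV. f p) = (\<Sum>a\<in>UNIV. \<Sum>b\<in>UNIV. f (a, b))"
  by (simp add: sum.cartesian_product flip: UNIV_Times_UNIV)

lemma bounded_bilinear_kron: "bounded_bilinear (kron :: 'a::finite cmat \<Rightarrow> 'b::finite cmat \<Rightarrow> _)"
  unfolding bilinear_conv_bounded_bilinear[symmetric] bilinear_def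
  by (auto intro!: linearI simp: kron_def vec_eq_iff algebra_simps)

interpretation kron: bounded_bilinear kron
  by (rule bounded_bilinear_kron)

definition assemblage :: "('a::finite \<times> 'b::finite) cmat \<Rightarrow> 'b cmat \<Rightarrow> 'a cmat" where
  "assemblage \<rho> Y = ptrace_B (\<rho> ** kron (mat 1) Y)"

lemma assemblage_entry:
  "assemblage \<rho> Y $ c $ a = (\<Sum>d\<in>UNIV. \<Sum>e\<in>UNIV. \<rho> $ (c, d) $ (a, e) * Y $ e $ d)"
proof -
  have [simp]: "(\<Sum>x\<in>UNIV. if P then f x else 0) = (if P then \<Sum>x\<in>UNIV. f x else 0)"
    for P and f :: "'b \<Rightarrow> complex"
    by simp
  show ?thesis
    unfolding assemblage_def ptrace_B_def matrix_matrix_mult_def kron_def mat_def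
    by (simp add: sum_UNIV_prod if_distrib if_distribR cong: if_cong)
qed

lemma linear_assemblage: "linear (assemblage \<rho>)"
  by (rule linearI)
    (simp_all add: vec_eq_iff assemblage_entry algebra_simps sum.distrib scaleR_sum_right)

lemma assemblage_mat_1: "assemblage \<rho> (mat 1) = ptrace_B \<rho>"
  by (simp add: vec_eq_iff assemblage_entry ptrace_B_def mat_def if_distrib cong: if_cong)

lemma joint_prob_eq_mtrace_assemblage:
  "joint_prob \<rho> A B a b = mtrace (assemblage \<rho> (snd B b) ** snd A a)"
proof -
  have "joint_prob \<rho> A B a b = (\<Sum>a1\<in>UNIV. \<Sum>b1\<in>UNIV. \<Sum>a2\<in>UNIV. \<Sum>b2\<in>UNIV.
      snd A a $ a1 $ a2 * snd B b $ b1 $ b2 * \<rho> $ (a2, b2) $ (a1, b1))"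
    unfolding joint_prob_def mtrace_def matrix_matrix_mult_def kron_def
    by (simp add: sum_UNIV_prod)
  also have "\<dots> = (\<Sum>a1\<in>UNIV. \<Sum>a2\<in>UNIV. \<Sum>b2\<in>UNIV. \<Sum>b1\<in>UNIV.
      snd A a $ a1 $ a2 * snd B b $ b1 $ b2 * \<rho> $ (a2, b2) $ (a1, b1))"
    by (rule sum.cong[OF refl], subst sum.swap, rule sum.cong[OF refl], rule sum.swap)
  also have "\<dots> = (\<Sum>a2\<in>UNIV. \<Sum>a1\<in>UNIV. \<Sum>b2\<in>UNIV. \<Sum>b1\<in>UNIV.
      snd A a $ a1 $ a2 * snd B b $ b1 $ b2 * \<rho> $ (a2, b2) $ (a1, b1))"
    by (rule sum.swap)
  also have "\<dots> = mtrace (assemblage \<rho> (snd B b) ** snd A a)"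
    unfolding mtrace_def matrix_matrix_mult_def assemblage_entry
    by (simp add: sum_distrib_left sum_distrib_right algebra_simps)
  finally show ?thesis .
qed

lemma pauli_tomography:
  fixes X :: "('a::finite \<times> 2) cmat"
  shows "X = kron (ptrace_B X) ((1/2) *\<^sub>R mat 1)
           + (\<Sum>k\<in>UNIV. kron (assemblage X (pauli k)) ((1/2) *\<^sub>R pauli k))"
    (is "X = ?R")
proof -
  have half: "(x - y) / 2 + (x + y) / 2 = x" "(y - x) / 2 + (x + y) / 2 = y" for x y :: complex
    by (simp_all add: diff_divide_distrib add_divide_distrib)
  have "?R $ (c, d) $ (a, e) = ptrace_B X $ c $ a * mat 1 $ d $ e / 2
      + (\<Sum>k\<in>UNIV. assemblage X (pauli k) $ c $ a * pauli k $ d $ e / 2)" for c a d e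
    by (simp add: kron_def sum_component vector_scaleR_component, simp add: scaleR_conv_of_real)
  also have "\<dots> c a d e = X $ (c, d) $ (a, e)" for c a d e
    using exhaust_2[of d] exhaust_2[of e]
    by (elim disjE) (simp_all add: assemblage_entry ptrace_B_def UNIV_2 sum_3 pauli_entries mat_def
        algebra_simps, simp_all only: half)
  finally have "?R $ (c, d) $ (a, e) = X $ (c, d) $ (a, e)" for c a d e .
  then show ?thesis by (simp add: vec_eq_iff split_paired_All)
qed

section \<open>Averages of product states\<close>

lemma integrable_bounded_pmf:
  fixes f :: "'l \<Rightarrow> 'b::{banach, second_countable_topology}"
  assumes "\<And>l. norm (f l) \<le> C"
  shows "integrable (measure_pmf P) f"
  by (rule measure_pmf.integrable_const_bound[where B = C]) (auto simp: assms)

lemma integrable_scaled_states: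
  fixes \<sigma> :: "'l \<Rightarrow> 'n::finite cmat"
  assumes "\<And>l. qstate (\<sigma> l)" "\<And>l. \<bar>f l\<bar> \<le> c"
  shows "integrable (measure_pmf P) (\<lambda>l. f l *\<^sub>R \<sigma> l)"
proof -
  obtain C where C: "\<And>M :: 'n cmat. qstate M \<Longrightarrow> norm M \<le> C"
    using bounded_qstates unfolding bounded_iff by auto
  have "0 \<le> c"
    using abs_ge_zero assms(2) by (rule order_trans)
  have "norm (f l *\<^sub>R \<sigma> l) \<le> c * C" for l
    unfolding norm_scaleR
    by (rule mult_mono) (auto simp: assms C \<open>0 \<le> c\<close>)
  then show ?thesis by (intro integrable_bounded_pmf)
qed

lemma integrable_states:
  fixes \<sigma> :: "'l \<Rightarrow> 'n::finite cmat"
  assumes "\<And>l. qstate (\<sigma> l)"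
  shows "integrable (measure_pmf P) \<sigma>"
  using integrable_scaled_states[of \<sigma> "\<lambda>_. 1" 1] assms by simp

lemma integral_mem_closed_convex:
  fixes f :: "'l \<Rightarrow> 'a::euclidean_space"
  assumes "prob_space M" "closed C" "convex C" "integrable M f" "AE x in M. f x \<in> C"
  shows "integral\<^sup>L M f \<in> C"
proof (rule ccontr)
  assume "integral\<^sup>L M f \<notin> C"
  then obtain a b where ab: "inner a (integral\<^sup>L M f) < b" "\<forall>x\<in>C. b < inner a x"
    using separating_hyperplane_closed_point[OF assms(3,2)] by blast
  have "b \<le> integral\<^sup>L M (\<lambda>x. inner a (f x))"
    using assms(5) ab(2)
    by (intro prob_space.integral_ge_const[OF assms(1)] integrable_inner_right assms(4))
      (auto elim!: eventually_mono intro: less_imp_le)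
  also have "\<dots> = inner a (integral\<^sup>L M f)"
    using assms(4) by (rule integral_inner_right)
  finally show False using ab(1) by simp
qed

lemma separable_if_in_convex_hull_product_states:
  fixes \<tau> :: "('a::finite \<times> 'b::finite) cmat"
  assumes "\<tau> \<in> convex hull {kron A B | A B. qstate A \<and> qstate B}"
  shows "separable \<tau>"
proof -
  obtain S u where S: "finite S" "S \<subseteq> {kron A B | A B. qstate A \<and> qstate B}"
    and u: "\<forall>x\<in>S. 0 \<le> u x" "sum u S = 1" "(\<Sum>x\<in>S. u x *\<^sub>R x) = \<tau>"
    using assms unfolding convex_hull_explicit by blast
  have "\<forall>x\<in>S. \<exists>p. qstate (fst p) \<and> qstate (snd p) \<and> kron (fst p) (snd p) = x"
    using S(2) by force
  from bchoice[OF this] obtain g where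
    g: "\<forall>x\<in>S. qstate (fst (g x)) \<and> qstate (snd (g x)) \<and> kron (fst (g x)) (snd (g x)) = x"
    by blast
  obtain h where h: "bij_betw h {..<card S} S"
    using ex_bij_betw_nat_finite[OF S(1)] by (auto simp: lessThan_atLeast0)
  have hS: "h i \<in> S" if "i < card S" for i
    using h that by (auto simp: bij_betw_def)
  have weights: "(\<Sum>i<card S. u (h i)) = 1"
    using sum.reindex_bij_betw[OF h, of u] u(2) by simp
  have "\<tau> = (\<Sum>i<card S. u (h i) *\<^sub>R h i)"
    using sum.reindex_bij_betw[OF h, of "\<lambda>x. u x *\<^sub>R x"] u(3) by simp
  also have "\<dots> = (\<Sum>i<card S. u (h i) *\<^sub>R kron (fst (g (h i))) (snd (g (h i))))"
    using g hS by (intro sum.cong) auto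
  finally have combination: "\<tau> = \<dots>" .
  show ?thesis
    unfolding separable_def
  proof (intro exI conjI)
    show "\<forall>i<card S. 0 \<le> (u \<circ> h) i \<and> qstate ((fst \<circ> g \<circ> h) i) \<and> qstate ((snd \<circ> g \<circ> h) i)"
      using g hS u(1) by simp
  qed (simp_all add: weights combination)
qed

lemma separable_expectation_kron:
  fixes \<sigma> :: "'l \<Rightarrow> 'a::finite cmat" and \<beta> :: "'l \<Rightarrow> 'b::finite cmat"
  assumes "\<And>l. qstate (\<sigma> l)" "\<And>l. qstate (\<beta> l)"
  shows "separable (measure_pmf.expectation P (\<lambda>l. kron (\<sigma> l) (\<beta> l)))"
proof (rule separable_if_in_convex_hull_product_states)
  let ?K = "{kron A B | (A :: 'a cmat) (B :: 'b cmat). qstate A \<and> qstate B}"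
  have "?K = (\<lambda>p. kron (fst p) (snd p)) ` (Collect qstate \<times> Collect qstate)"
    by force
  moreover have "compact ((\<lambda>p. kron (fst p) (snd p)) ` (Collect qstate \<times> Collect qstate))"
    by (intro compact_continuous_image compact_Times compact_qstates
        kron.continuous_on continuous_on_fst continuous_on_snd continuous_on_id)
  ultimately have "compact ?K"
    by simp
  then have hull: "compact (convex hull ?K)"
    by (rule compact_convex_hull)
  then have "bounded (convex hull ?K)"
    by (rule compact_imp_bounded)
  then obtain C where C: "\<forall>M\<in>convex hull ?K. norm M \<le> C"
    unfolding bounded_iff by blast
  have mem: "kron (\<sigma> l) (\<beta> l) \<in> convex hull ?K" for l
    by (rule hull_inc, rule CollectI, intro exI conjI) (rule refl, rule assms, rule assms)
  have "integrable (measure_pmf P) (\<lambda>l. kron (\<sigma> l) (\<beta> l))"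
    using C mem by (intro integrable_bounded_pmf[where C = C]) blast
  then show "measure_pmf.expectation P (\<lambda>l. kron (\<sigma> l) (\<beta> l)) \<in> convex hull ?K"
    using measure_pmf.prob_space_axioms compact_imp_closed[OF hull] convex_convex_hull mem
    by (intro integral_mem_closed_convex) auto
qed

section \<open>Local hidden state models\<close>

definition lhs_model ::
  "('a::finite \<times> 'b::finite) cmat \<Rightarrow> 'l pmf \<Rightarrow> ('l \<Rightarrow> 'a cmat) \<Rightarrow> ('b povm \<Rightarrow> 'l \<Rightarrow> nat \<Rightarrow> real) \<Rightarrow> bool"
  where
  "lhs_model \<rho> P \<sigma> r \<longleftrightarrow> (\<forall>l. qstate (\<sigma> l)) \<and> response r \<and>
     (\<forall>A B a b. is_povm A \<longrightarrow> is_povm B \<longrightarrow> a < fst A \<longrightarrow> b < fst B \<longrightarrow>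
        joint_prob \<rho> A B a b =
          complex_of_real (measure_pmf.expectation P (\<lambda>l. Re (mtrace (\<sigma> l ** snd A a)) * r B l b)))"

lemma unsteerable_B_to_A_iff_lhs_model:
  fixes L :: "'l itself"
  shows "unsteerable_B_to_A L \<rho> \<longleftrightarrow> (\<exists>(P :: 'l pmf) \<sigma> r. lhs_model \<rho> P \<sigma> r)"
  unfolding unsteerable_B_to_A_def lhs_model_def by blast

lemma assemblage_of_lhs_model:
  fixes \<rho> :: "('a::finite \<times> 'b::finite) cmat"
  assumes "lhs_model \<rho> P \<sigma> r" and B: "is_povm B" "b < fst B"
  shows "assemblage \<rho> (snd B b) = measure_pmf.expectation P (\<lambda>l. r B l b *\<^sub>R \<sigma> l)"
proof (rule eq_if_qform_eq)
  have states: "\<And>l. qstate (\<sigma> l)" and resp: "response r"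
    and model: "\<forall>A B a b. is_povm A \<longrightarrow> is_povm B \<longrightarrow> a < fst A \<longrightarrow> b < fst B \<longrightarrow>
         joint_prob \<rho> A B a b =
           complex_of_real (measure_pmf.expectation P (\<lambda>l. Re (mtrace (\<sigma> l ** snd A a)) * r B l b))"
    using assms(1) unfolding lhs_model_def by blast+
  fix v :: "complex ^ 'a"
  assume v: "(\<Sum>k\<in>UNIV. (cmod (v$k))\<^sup>2) \<le> 1"
  let ?A = "two_outcome_povm (proj v)"
  have A: "is_povm ?A"
    using psd_proj psd_id_minus_proj[OF v] by (rule is_povm_two_outcome_povm)
  have pointwise: "of_real (Re (qform (\<sigma> l) v) * r B l b) = qform (r B l b *\<^sub>R \<sigma> l) v" for l
  proof -
    have "qform (\<sigma> l) v = of_real (Re (qform (\<sigma> l) v))"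
      using states[of l] by (simp add: qstate_def psd_iff_qform complex_eq_iff)
    then show ?thesis by (metis qform_scaleR of_real_mult mult.commute)
  qed
  have "qform (assemblage \<rho> (snd B b)) v = joint_prob \<rho> ?A B 0 b"
    by (simp add: joint_prob_eq_mtrace_assemblage two_outcome_povm_def mtrace_mult_proj)
  also have "\<dots> = of_real (measure_pmf.expectation P (\<lambda>l. Re (qform (\<sigma> l) v) * r B l b))"
    using model[rule_format, OF A B(1) _ B(2), of 0] by (simp add: two_outcome_povm_def mtrace_mult_proj)
  also have "\<dots> = measure_pmf.expectation P (\<lambda>l. qform (r B l b *\<^sub>R \<sigma> l) v)"
    unfolding pointwise[symmetric] by (rule integral_complex_of_real[symmetric])
  also have "\<dots> = qform (measure_pmf.expectation P (\<lambda>l. r B l b *\<^sub>R \<sigma> l)) v"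
    using response_bounds[OF resp B] states
    by (intro integral_bounded_linear bounded_linear_qform integrable_scaled_states) auto
  finally show "qform (assemblage \<rho> (snd B b)) v
      = qform (measure_pmf.expectation P (\<lambda>l. r B l b *\<^sub>R \<sigma> l)) v" .
qed

lemma lhs_model_pauli_assemblages:
  fixes \<rho> :: "('a::finite \<times> 2) cmat"
  assumes "lhs_model \<rho> P \<sigma> r"
  shows "ptrace_B \<rho> = measure_pmf.expectation P \<sigma>"
    and "assemblage \<rho> (pauli k) =
           measure_pmf.expectation P (\<lambda>l. (2 * r (pauli_measurement k) l 0 - 1) *\<^sub>R \<sigma> l)"
proof -
  have states: "\<And>l. qstate (\<sigma> l)" and resp: "response r"
    using assms unfolding lhs_model_def by blast+
  let ?M = "pauli_measurement k"
  let ?r = "\<lambda>x l. r ?M l x"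
  have M: "is_povm ?M"
    by (rule is_povm_pauli_measurement)
  have bounds: "\<bar>?r x l\<bar> \<le> 1" if "x < 2" for x l
    using response_bounds[OF resp M, of x l] that by (simp add: pauli_measurement_def two_outcome_povm_def)
  have int: "integrable (measure_pmf P) (\<lambda>l. ?r x l *\<^sub>R \<sigma> l)" if "x < 2" for x
    using bounds[OF that] states by (intro integrable_scaled_states) auto
  have outcome: "assemblage \<rho> (snd ?M x) = measure_pmf.expectation P (\<lambda>l. ?r x l *\<^sub>R \<sigma> l)"
    if "x < 2" for x
    using assemblage_of_lhs_model[OF assms M, of x] that by (simp add: pauli_measurement_def two_outcome_povm_def)
  have "ptrace_B \<rho> = assemblage \<rho> (snd ?M 0 + snd ?M 1)"
    by (simp add: assemblage_mat_1 pauli_measurement_def two_outcome_povm_def)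
  also have "\<dots> = measure_pmf.expectation P (\<lambda>l. (?r 0 l + ?r 1 l) *\<^sub>R \<sigma> l)"
    using int by (simp add: linear_add[OF linear_assemblage] outcome scaleR_add_left)
  also have "\<dots> = measure_pmf.expectation P \<sigma>"
    using response_two_outcome_sum[OF resp M[unfolded pauli_measurement_def]]
    by (simp add: pauli_measurement_def)
  finally show marginal: "ptrace_B \<rho> = measure_pmf.expectation P \<sigma>" .
  have "assemblage \<rho> (pauli k) = 2 *\<^sub>R assemblage \<rho> (snd ?M 0) - assemblage \<rho> (mat 1)"
    by (simp add: pauli_eq_bloch_state pauli_measurement_def two_outcome_povm_def
        linear_diff[OF linear_assemblage] linear_scale[OF linear_assemblage])
  also have "\<dots> = 2 *\<^sub>R measure_pmf.expectation P (\<lambda>l. ?r 0 l *\<^sub>R \<sigma> l)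
      - measure_pmf.expectation P \<sigma>"
    by (simp add: outcome assemblage_mat_1 marginal)
  also have "\<dots> = measure_pmf.expectation P (\<lambda>l. 2 *\<^sub>R (?r 0 l *\<^sub>R \<sigma> l) - \<sigma> l)"
    using int[of 0] integrable_states[where \<sigma> = \<sigma>, OF states] by (simp del: scaleR_scaleR)
  also have "(\<lambda>l. 2 *\<^sub>R (?r 0 l *\<^sub>R \<sigma> l) - \<sigma> l) = (\<lambda>l. (2 * ?r 0 l - 1) *\<^sub>R \<sigma> l)"
    by (simp add: algebra_simps)
  finally show "assemblage \<rho> (pauli k) =
      measure_pmf.expectation P (\<lambda>l. (2 * ?r 0 l - 1) *\<^sub>R \<sigma> l)" .
qed

(* 2 P(+|sigma_k, l) - 1 is the expected spin along axis k in the hidden state l. *)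
definition bob_bloch_vector :: "real \<Rightarrow> (2 povm \<Rightarrow> 'l \<Rightarrow> nat \<Rightarrow> real) \<Rightarrow> 'l \<Rightarrow> real ^ 3" where
  "bob_bloch_vector \<mu> r l = (\<chi> k. \<mu> * (2 * r (pauli_measurement k) l 0 - 1))"

lemma abs_bob_bloch_vector_le:
  assumes "response r"
  shows "\<bar>bob_bloch_vector \<mu> r l $ k\<bar> \<le> \<bar>\<mu>\<bar>"
proof -
  have "0 \<le> r (pauli_measurement k) l 0 \<and> r (pauli_measurement k) l 0 \<le> 1"
    using response_bounds[OF assms is_povm_pauli_measurement, of 0]
    by (simp add: pauli_measurement_def two_outcome_povm_def)
  then have "\<bar>2 * r (pauli_measurement k) l 0 - 1\<bar> \<le> 1"
    by (auto simp: abs_le_iff)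
  then show ?thesis
    by (simp add: bob_bloch_vector_def abs_mult mult_left_le)
qed

lemma noisy_state_eq_expectation:
  fixes \<rho> :: "('a::finite \<times> 2) cmat"
  assumes model: "lhs_model \<rho> P \<sigma> r"
  shows "\<mu> *\<^sub>R \<rho> + (1 - \<mu>) *\<^sub>R kron (ptrace_B \<rho>) ((1/2) *\<^sub>R mat 1)
    = measure_pmf.expectation P (\<lambda>l. kron (\<sigma> l) (bloch_state (bob_bloch_vector \<mu> r l)))"
proof -
  have states: "\<And>l. qstate (\<sigma> l)" and resp: "response r"
    using model unfolding lhs_model_def by blast+
  let ?s = "bob_bloch_vector \<mu> r"
  let ?T = "ptrace_B \<rho>" and ?H = "(1/2) *\<^sub>R mat 1 :: complex ^ 2 ^ 2"
  have int: "integrable (measure_pmf P) (\<lambda>l. (?s l $ k) *\<^sub>R \<sigma> l)" for k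
    using states abs_bob_bloch_vector_le[OF resp] by (rule integrable_scaled_states)
  have expand: "kron (\<sigma> l) (bloch_state (?s l))
      = kron (\<sigma> l) ?H + (\<Sum>k\<in>UNIV. kron ((?s l $ k) *\<^sub>R \<sigma> l) ((1/2) *\<^sub>R pauli k))" for l
    by (simp add: bloch_state_def kron.add_right kron.sum_right kron.scaleR_left kron.scaleR_right
        scaleR_add_right scaleR_sum_right)
  have coeff: "measure_pmf.expectation P (\<lambda>l. (?s l $ k) *\<^sub>R \<sigma> l) = \<mu> *\<^sub>R assemblage \<rho> (pauli k)"
    for k
    using lhs_model_pauli_assemblages(2)[OF model, of k]
    by (simp add: bob_bloch_vector_def flip: scaleR_scaleR)
  have tomography:
    "(\<Sum>k\<in>UNIV. kron (assemblage \<rho> (pauli k)) ((1/2) *\<^sub>R pauli k)) = \<rho> - kron ?T ?H"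
    using pauli_tomography[of \<rho>] by (simp only: eq_diff_eq add.commute)
  have "measure_pmf.expectation P (\<lambda>l. kron (\<sigma> l) (bloch_state (?s l)))
      = kron (measure_pmf.expectation P \<sigma>) ?H
        + (\<Sum>k\<in>UNIV. kron (measure_pmf.expectation P (\<lambda>l. (?s l $ k) *\<^sub>R \<sigma> l)) ((1/2) *\<^sub>R pauli k))"
    using int integrable_states[where \<sigma> = \<sigma>, OF states]
    by (simp add: expand integrable_sum integral_sum integral_bounded_linear[OF kron.bounded_linear_left]
        integrable_bounded_linear[OF kron.bounded_linear_left])
  also have "\<dots> = kron ?T ?H + \<mu> *\<^sub>R (\<rho> - kron ?T ?H)"
    by (simp add: coeff kron.scaleR_left
        flip: scaleR_sum_right tomography lhs_model_pauli_assemblages(1)[OF model])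
  also have "\<dots> = \<mu> *\<^sub>R \<rho> + (1 - \<mu>) *\<^sub>R kron ?T ?H"
    by (simp add: algebra_simps)
  finally show ?thesis ..
qed

lemma separable_noisy_if_unsteerable_B_to_A:
  fixes \<rho> :: "('a::finite \<times> 2) cmat" and L :: "'l itself"
  assumes "0 \<le> \<mu>" "\<mu> \<le> 1 / sqrt 3" "unsteerable_B_to_A L \<rho>"
  shows "separable (\<mu> *\<^sub>R \<rho> + (1 - \<mu>) *\<^sub>R kron (ptrace_B \<rho>) ((1/2) *\<^sub>R mat 1))"
proof -
  obtain P :: "'l pmf" and \<sigma> r where model: "lhs_model \<rho> P \<sigma> r"
    using assms(3) unfolding unsteerable_B_to_A_iff_lhs_model by blast
  then have states: "\<And>l. qstate (\<sigma> l)" and resp: "response r"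
    unfolding lhs_model_def by blast+
  have "qstate (bloch_state (bob_bloch_vector \<mu> r l))" for l
    using abs_bob_bloch_vector_le[OF resp, of \<mu> l] assms(1,2)
    by (intro qstate_bloch_state norm_le_1_if_abs_components_le[where c = \<mu>]) auto
  with states show ?thesis
    unfolding noisy_state_eq_expectation[OF model] by (rule separable_expectation_kron)
qed

section \<open>Exchanging the parties\<close>

definition swap_parties :: "('a::finite \<times> 'b::finite) cmat \<Rightarrow> ('b \<times> 'a) cmat" where
  "swap_parties \<rho> = (\<chi> p q. \<rho> $ prod.swap p $ prod.swap q)"

lemma swap_parties_swap_parties [simp]: "swap_parties (swap_parties \<rho>) = \<rho>"
  by (simp add: vec_eq_iff swap_parties_def)

lemma joint_prob_swap_parties: "joint_prob (swap_parties \<rho>) B A b a = joint_prob \<rho> A B a b"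
proof -
  have swap_sum: "(\<Sum>p\<in>UNIV. g (prod.swap p)) = (\<Sum>p\<in>UNIV. g p)" for g :: "_ \<Rightarrow> complex"
    by (rule sum.reindex_bij_witness[of _ prod.swap prod.swap]) auto
  have "joint_prob (swap_parties \<rho>) B A b a =
      (\<Sum>p\<in>UNIV. \<Sum>q\<in>UNIV. kron (snd B b) (snd A a) $ p $ q * \<rho> $ prod.swap q $ prod.swap p)"
    unfolding joint_prob_def mtrace_def matrix_matrix_mult_def swap_parties_def by simp
  also have "\<dots> = (\<Sum>p\<in>UNIV. \<Sum>q\<in>UNIV.
      kron (snd B b) (snd A a) $ prod.swap p $ prod.swap q * \<rho> $ q $ p)"
    by (subst swap_sum[symmetric], rule sum.cong[OF refl], subst swap_sum[symmetric]) simp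
  also have "\<dots> = joint_prob \<rho> A B a b"
    unfolding joint_prob_def mtrace_def matrix_matrix_mult_def by (simp add: kron_def mult.commute)
  finally show ?thesis .
qed

lemma unsteerable_B_to_A_swap_parties:
  fixes L :: "'l itself"
  assumes "unsteerable_A_to_B L \<rho>"
  shows "unsteerable_B_to_A L (swap_parties \<rho>)"
proof -
  obtain P :: "'l pmf" and r \<sigma> where "\<forall>l. qstate (\<sigma> l)" "response r"
    and model: "\<forall>A B a b. is_povm A \<longrightarrow> is_povm B \<longrightarrow> a < fst A \<longrightarrow> b < fst B \<longrightarrow>
         joint_prob \<rho> A B a b =
           complex_of_real (measure_pmf.expectation P (\<lambda>l. r A l a * Re (mtrace (\<sigma> l ** snd B b))))"
    using assms unfolding unsteerable_A_to_B_def by blast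
  then show ?thesis
    unfolding unsteerable_B_to_A_def
    by (intro exI[where x = P] exI[where x = \<sigma>] exI[where x = r] conjI)
      (simp_all add: joint_prob_swap_parties mult.commute)
qed

lemma separable_swap_parties:
  assumes "separable \<tau>"
  shows "separable (swap_parties \<tau>)"
proof -
  obtain n :: nat and p A B where weights: "\<forall>i<n. 0 \<le> p i \<and> qstate (A i) \<and> qstate (B i)" "(\<Sum>i<n. p i) = 1"
    and decomposition: "\<tau> = (\<Sum>i<n. p i *\<^sub>R kron (A i) (B i))"
    using assms unfolding separable_def by blast
  have "swap_parties \<tau> = (\<Sum>i<n. p i *\<^sub>R kron (B i) (A i))"
    unfolding decomposition
    by (simp add: vec_eq_iff swap_parties_def sum_component kron_def mult.commute)
  then show ?thesis
    unfolding separable_def using weights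
    by (intro exI[where x = n] exI[where x = p] exI[where x = B] exI[where x = A]) auto
qed

lemma swap_parties_noisy:
  fixes \<rho> :: "('a::finite \<times> 'b::finite) cmat"
  shows "swap_parties (\<mu> *\<^sub>R \<rho> + (1 - \<mu>) *\<^sub>R kron ((1/2) *\<^sub>R mat 1) (ptrace_A \<rho>))
    = \<mu> *\<^sub>R swap_parties \<rho> + (1 - \<mu>) *\<^sub>R kron (ptrace_B (swap_parties \<rho>)) ((1/2) *\<^sub>R mat 1)"
  by (simp add: vec_eq_iff swap_parties_def kron_def ptrace_A_def ptrace_B_def mult.commute)

lemma separable_noisy_if_unsteerable_A_to_B:
  fixes \<rho> :: "(2 \<times> 'b::finite) cmat"
  assumes "0 \<le> \<mu>" "\<mu> \<le> 1 / sqrt 3" "unsteerable_A_to_B L \<rho>"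
  shows "separable (\<mu> *\<^sub>R \<rho> + (1 - \<mu>) *\<^sub>R kron ((1/2) *\<^sub>R mat 1) (ptrace_A \<rho>))"
proof -
  have "separable (swap_parties (\<mu> *\<^sub>R \<rho> + (1 - \<mu>) *\<^sub>R kron ((1/2) *\<^sub>R mat 1) (ptrace_A \<rho>)))"
    unfolding swap_parties_noisy
    using assms(1,2) unsteerable_B_to_A_swap_parties[OF assms(3)]
    by (rule separable_noisy_if_unsteerable_B_to_A)
  then show ?thesis
    using separable_swap_parties by fastforce
qed

theorem mainTheorem3:
  fixes \<rho>1 :: "('d::finite \<times> 2) cmat" and \<rho>2 :: "(2 \<times> 'd) cmat"
    and \<mu>1 \<mu>2 :: real
  assumes "CARD('d) \<ge> 2"
  shows "(qstate \<rho>1 \<and> 0 \<le> \<mu>1 \<and> \<mu>1 \<le> 1 / sqrt 3 \<and>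
          entangled (\<mu>1 *\<^sub>R \<rho>1 + (1 - \<mu>1) *\<^sub>R kron (ptrace_B \<rho>1) ((1/2) *\<^sub>R mat 1))
          \<longrightarrow> steerable_B_to_A TYPE('l) \<rho>1)
       \<and> (qstate \<rho>2 \<and> 0 \<le> \<mu>2 \<and> \<mu>2 \<le> 1 / sqrt 3 \<and>
          entangled (\<mu>2 *\<^sub>R \<rho>2 + (1 - \<mu>2) *\<^sub>R kron ((1/2) *\<^sub>R mat 1) (ptrace_A \<rho>2))
          \<longrightarrow> steerable_A_to_B TYPE('l) \<rho>2)"
  using separable_noisy_if_unsteerable_B_to_A[of \<mu>1 "TYPE('l)" \<rho>1]
    separable_noisy_if_unsteerable_A_to_B[of \<mu>2 "TYPE('l)" \<rho>2]
  unfolding entangled_def by blast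

end
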